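(* For every integer $r\geq 3$ and every positive integer $n$, every collection of $n$ matchings, each of size $\lceil \frac{(r+1)n}{2}\rceil$, in an $r$-uniform hypergraph contains a rainbow matching of size at least $n-2^r\sqrt{n}$.
   Context: A hypergraph is $r$-uniform if every edge contains exactly $r$ vertices. A matching is a set of pairwise vertex-disjoint edges. Given a collection (repetitions allowed) of matchings $M_1,\dots,M_n$ in a hypergraph, a matching $M\subseteq \bigcup_{i=1}^n M_i$ is rainbow if there is an injection $\phi:M\to[n]$ such that every edge $e\in M$ belongs to $M_{\phi(e)}$. *)

theory Defs
  imports Complex_Main
begin

definition uniform :: "nat \<Rightarrow> 'a set set \<Rightarrow> bool" where
  "uniform r H \<longleftrightarrow> (\<forall>e\<in>H. finite e \<and> card e = r)"

definition is_matching :: "'a set set \<Rightarrow> bool" where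
  "is_matching M \<longleftrightarrow> (\<forall>e\<in>M. \<forall>f\<in>M. e \<noteq> f \<longrightarrow> e \<inter> f = {})"

definition rainbow_matching :: "(nat \<Rightarrow> 'a set set) \<Rightarrow> nat \<Rightarrow> 'a set set \<Rightarrow> bool" where
  "rainbow_matching Ms n M \<longleftrightarrow> is_matching M \<and> M \<subseteq> (\<Union>i<n. Ms i) \<and>
     (\<exists>\<phi>. inj_on \<phi> M \<and> \<phi> ` M \<subseteq> {..<n} \<and> (\<forall>e\<in>M. e \<in> Ms (\<phi> e)))"

end

(*
  Take a maximum rainbow matching M, with m edges, and let k = n - m be the number of unused
  colours. By maximality every edge of an unused colour meets M, and two edges of distinct
  unused colours that both meet M only in the same edge e must intersect, since otherwise they
  could replace e. Double counting the edges of M met by the edges of an unused colour shows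
  that at least (r + 1) n - r m of them are private, i.e. meet exactly one edge of M. For a
  fixed e, a Bollobas-type argument allows at most 4^r unused colours with two or more private
  edges at e, and each colour has at most r of them. Summing, k ((r + 1) n - r m) is at most
  m (k + (r - 1) 4^r); as n = m + k this gives k^2 <= n 4^r.
*)

theory Submission
  imports Defs
begin

lemma is_matching_subset: "is_matching M \<Longrightarrow> M' \<subseteq> M \<Longrightarrow> is_matching M'"
  unfolding is_matching_def by blast

lemma is_matching_Un:
  assumes "is_matching M" and "is_matching N" and "\<And>e f. e \<in> M \<Longrightarrow> f \<in> N \<Longrightarrow> e \<inter> f = {}"
  shows "is_matching (M \<union> N)"
  using assms unfolding is_matching_def by blast

lemma card_matching_edges_meeting_le:
  assumes "is_matching F" and "finite e"
  shows "card {f\<in>F. f \<inter> e \<noteq> {}} \<le> card e"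
proof -
  let ?S = "{f\<in>F. f \<inter> e \<noteq> {}}"
  define pick where "pick f = (SOME v. v \<in> f \<inter> e)" for f
  have pick: "pick f \<in> f \<inter> e" if "f \<in> ?S" for f
    unfolding pick_def by (rule someI_ex) (use that in blast)
  have "inj_on pick ?S"
  proof (rule inj_onI)
    fix f g assume "f \<in> ?S" "g \<in> ?S" "pick f = pick g"
    then have "f \<inter> g \<noteq> {}" using pick[of f] pick[of g] by auto
    moreover have "f \<in> F" and "g \<in> F" using \<open>f \<in> ?S\<close> \<open>g \<in> ?S\<close> by auto
    ultimately show "f = g"
      using assms(1) unfolding is_matching_def by blast
  qed
  moreover have "pick ` ?S \<subseteq> e" using pick by blast
  ultimately show ?thesis using card_inj_on_le assms(2) by blast
qed

lemma card_sets_between: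
  assumes "finite W" and "A \<subseteq> W" and "B \<subseteq> W" and "A \<inter> B = {}"
  shows "card {X. X \<subseteq> W \<and> A \<subseteq> X \<and> X \<inter> B = {}} = 2 ^ (card W - card A - card B)"
proof -
  have "{X. X \<subseteq> W \<and> A \<subseteq> X \<and> X \<inter> B = {}} = (\<lambda>Y. Y \<union> A) ` Pow (W - A - B)"
  proof (intro equalityI subsetI)
    fix X assume "X \<in> {X. X \<subseteq> W \<and> A \<subseteq> X \<and> X \<inter> B = {}}"
    then have "X = (X - A) \<union> A" and "X - A \<in> Pow (W - A - B)" by blast+
    then show "X \<in> (\<lambda>Y. Y \<union> A) ` Pow (W - A - B)" by (rule image_eqI)
  qed (use assms(2,4) in auto)
  moreover have "inj_on (\<lambda>Y. Y \<union> A) (Pow (W - A - B))"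
    by (rule inj_onI) blast
  moreover have "card (W - A - B) = card W - card A - card B"
  proof -
    have "finite A" and "finite B" using assms(1-3) finite_subset by blast+
    moreover have "B \<subseteq> W - A" using assms(3,4) by blast
    ultimately show ?thesis
      using assms(2) by (simp add: card_Diff_subset)
  qed
  ultimately show ?thesis
    using assms(1) by (simp add: card_image card_Pow)
qed

text \<open>A weak symmetric Bollobas-type bound: the families of sets separating A i from B i
  are pairwise disjoint and of equal size inside the power set of the ground set.\<close>
lemma card_cross_intersecting_pairs_le:
  assumes "finite I"
    and "\<And>i. i \<in> I \<Longrightarrow>
      finite (A i) \<and> finite (B i) \<and> card (A i) = a \<and> card (B i) = b \<and> A i \<inter> B i = {}"
    and "\<And>i j. i \<in> I \<Longrightarrow> j \<in> I \<Longrightarrow> i \<noteq> j \<Longrightarrow> A i \<inter> B j \<noteq> {}"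
  shows "card I \<le> 2 ^ (a + b)"
proof (cases "I = {}")
  case False
  then obtain i0 where "i0 \<in> I" by blast
  define W where "W = (\<Union>i\<in>I. A i \<union> B i)"
  define sep where "sep i = {X. X \<subseteq> W \<and> A i \<subseteq> X \<and> X \<inter> B i = {}}" for i
  have "finite W" unfolding W_def using assms(1,2) by auto
  have card_sep: "card (sep i) = 2 ^ (card W - a - b)" if "i \<in> I" for i
  proof -
    have "A i \<subseteq> W" and "B i \<subseteq> W" using that unfolding W_def by blast+
    then show ?thesis
      using card_sets_between[OF \<open>finite W\<close>] assms(2)[OF that] unfolding sep_def by simp
  qed
  have "a + b \<le> card W"
  proof -
    have "card (A i0 \<union> B i0) \<le> card W"
      using \<open>finite W\<close> \<open>i0 \<in> I\<close> unfolding W_def by (intro card_mono) auto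
    then show ?thesis using assms(2)[OF \<open>i0 \<in> I\<close>] by (simp add: card_Un_disjoint)
  qed
  have "sep i \<inter> sep j = {}" if "i \<in> I" "j \<in> I" "i \<noteq> j" for i j
    using assms(3)[OF that] unfolding sep_def by blast
  moreover have "finite (sep i)" for i
    unfolding sep_def by (rule finite_subset[of _ "Pow W"]) (auto simp: \<open>finite W\<close>)
  ultimately have "card (\<Union>i\<in>I. sep i) = (\<Sum>i\<in>I. card (sep i))"
    using assms(1) by (intro card_UN_disjoint) auto
  then have "card I * 2 ^ (card W - a - b) = card (\<Union>i\<in>I. sep i)"
    using card_sep by simp
  also have "\<dots> \<le> card (Pow W)"
    using \<open>finite W\<close> by (intro card_mono) (auto simp: sep_def)
  also have "\<dots> = 2 ^ (card W - a - b) * 2 ^ (a + b)"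
    using \<open>a + b \<le> card W\<close> \<open>finite W\<close> by (simp add: card_Pow flip: power_add)
  finally show ?thesis by simp
qed simp

lemma sum_card_cross_intersecting_matchings_le:
  assumes "finite U"
    and "\<And>c. c \<in> U \<Longrightarrow> is_matching (P c) \<and> uniform r (P c) \<and> card (P c) \<le> r"
    and "\<And>c c' f f'. c \<in> U \<Longrightarrow> c' \<in> U \<Longrightarrow> c \<noteq> c' \<Longrightarrow>
      f \<in> P c \<Longrightarrow> f' \<in> P c' \<Longrightarrow> f \<inter> f' \<noteq> {}"
  shows "(\<Sum>c\<in>U. card (P c)) \<le> card U + (r - 1) * 4 ^ r"
proof -
  define Big where "Big = {c\<in>U. 2 \<le> card (P c)}"
  have "\<exists>f f'. f \<in> P c \<and> f' \<in> P c \<and> f \<noteq> f'" if "c \<in> Big" for c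
  proof -
    have "finite (P c)" and "\<not> card (P c) \<le> Suc 0"
      using that unfolding Big_def by (auto intro: card_ge_0_finite)
    then show ?thesis by (auto simp: card_le_Suc0_iff_eq)
  qed
  then obtain A B where AB: "\<And>c. c \<in> Big \<Longrightarrow> A c \<in> P c \<and> B c \<in> P c \<and> A c \<noteq> B c"
    by metis
  have "card Big \<le> 2 ^ (r + r)"
  proof (rule card_cross_intersecting_pairs_le)
    show "finite Big" unfolding Big_def using assms(1) by simp
    fix c assume "c \<in> Big"
    then have "c \<in> U" unfolding Big_def by simp
    then have "is_matching (P c)" and "uniform r (P c)" using assms(2) by blast+
    then show "finite (A c) \<and> finite (B c) \<and> card (A c) = r \<and> card (B c) = r \<and> A c \<inter> B c = {}"
      using AB[OF \<open>c \<in> Big\<close>] unfolding uniform_def is_matching_def by blast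
  next
    fix c c' assume "c \<in> Big" "c' \<in> Big" "c \<noteq> c'"
    then show "A c \<inter> B c' \<noteq> {}"
      using assms(3)[of c c' "A c" "B c'"] AB[OF \<open>c \<in> Big\<close>] AB[OF \<open>c' \<in> Big\<close>]
      unfolding Big_def by blast
  qed
  moreover have "(2::nat) ^ (r + r) = 4 ^ r"
    by (simp add: power_mult flip: mult_2)
  ultimately have "card Big \<le> 4 ^ r" by simp
  have "(\<Sum>c\<in>U. card (P c)) \<le> (\<Sum>c\<in>U. 1 + (r - 1) * of_bool (c \<in> Big))"
  proof (rule sum_mono)
    fix c assume "c \<in> U"
    then show "card (P c) \<le> 1 + (r - 1) * of_bool (c \<in> Big)"
      using assms(2)[of c] unfolding Big_def by auto
  qed
  also have "\<dots> = card U + (r - 1) * card Big"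
  proof -
    have "(\<Sum>c\<in>U. of_bool (c \<in> Big)) = card Big"
      using assms(1) unfolding Big_def by (simp add: Int_def)
    then show ?thesis
      by (simp only: sum.distrib flip: sum_distrib_left) simp
  qed
  also have "\<dots> \<le> card U + (r - 1) * 4 ^ r"
    using \<open>card Big \<le> 4 ^ r\<close> by simp
  finally show ?thesis .
qed

definition private_edges :: "'a set set \<Rightarrow> 'a set set \<Rightarrow> 'a set \<Rightarrow> 'a set set" where
  "private_edges F M e = {f\<in>F. {g\<in>M. f \<inter> g \<noteq> {}} = {e}}"

lemma private_edges_disjoint:
  assumes "e \<noteq> e'"
  shows "private_edges F M e \<inter> private_edges F M e' = {}"
  using assms unfolding private_edges_def by (simp add: disjoint_iff)

lemma sum_card_meeting_edges_le:
  assumes "is_matching F" and "finite F" and "finite M" and "uniform r M"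
  shows "(\<Sum>f\<in>F. card {e\<in>M. f \<inter> e \<noteq> {}}) \<le> r * card M"
proof -
  have "(\<Sum>f\<in>F. card {e\<in>M. f \<inter> e \<noteq> {}}) = (\<Sum>e\<in>M. card {f\<in>F. f \<inter> e \<noteq> {}})"
    using sum.swap_restrict[OF assms(2,3), of "\<lambda>_ _. 1::nat" "\<lambda>f e. f \<inter> e \<noteq> {}"] by simp
  also have "\<dots> \<le> (\<Sum>e\<in>M. r)"
  proof (rule sum_mono)
    fix e assume "e \<in> M"
    then show "card {f\<in>F. f \<inter> e \<noteq> {}} \<le> r"
      using card_matching_edges_meeting_le[OF assms(1)] assms(4) unfolding uniform_def by metis
  qed
  finally show ?thesis by (simp add: mult.commute)
qed

lemma card_private_edges:
  assumes "finite F" and "finite M"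
  shows "card {f\<in>F. card {e\<in>M. f \<inter> e \<noteq> {}} = 1} = (\<Sum>e\<in>M. card (private_edges F M e))"
proof -
  have "{f\<in>F. card {e\<in>M. f \<inter> e \<noteq> {}} = 1} = (\<Union>e\<in>M. private_edges F M e)"
  proof (intro equalityI subsetI)
    fix f assume "f \<in> {f\<in>F. card {e\<in>M. f \<inter> e \<noteq> {}} = 1}"
    then have "f \<in> F" and "card {e\<in>M. f \<inter> e \<noteq> {}} = 1" by simp_all
    then obtain e where e: "{g\<in>M. f \<inter> g \<noteq> {}} = {e}"
      using card_1_singleton_iff[of "{g\<in>M. f \<inter> g \<noteq> {}}"] by auto
    then have "e \<in> M" by blast
    with e \<open>f \<in> F\<close> show "f \<in> (\<Union>e\<in>M. private_edges F M e)"
      unfolding private_edges_def by blast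
  next
    fix f assume "f \<in> (\<Union>e\<in>M. private_edges F M e)"
    then obtain e where "f \<in> F" and "{g\<in>M. f \<inter> g \<noteq> {}} = {e}"
      unfolding private_edges_def by blast
    then show "f \<in> {f\<in>F. card {e\<in>M. f \<inter> e \<noteq> {}} = 1}" by simp
  qed
  moreover have "card (\<Union>e\<in>M. private_edges F M e) = (\<Sum>e\<in>M. card (private_edges F M e))"
  proof (rule card_UN_disjoint)
    show "\<forall>e\<in>M. finite (private_edges F M e)"
      using assms(1) unfolding private_edges_def by simp
  qed (simp_all add: assms(2) private_edges_disjoint)
  ultimately show ?thesis by simp
qed

text \<open>Every edge of F has positive degree towards M, and degree at least two unless it is
  private; the degrees sum to at most r |M|.\<close>
lemma two_card_le_private_edges:
  assumes "is_matching F" and "finite F" and "finite M" and "uniform r M"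
    and "\<And>f. f \<in> F \<Longrightarrow> \<exists>e\<in>M. f \<inter> e \<noteq> {}"
  shows "2 * card F \<le> (\<Sum>e\<in>M. card (private_edges F M e)) + r * card M"
proof -
  let ?deg = "\<lambda>f. card {e\<in>M. f \<inter> e \<noteq> {}}"
  have "2 * card F = (\<Sum>f\<in>F. 2)" by simp
  also have "\<dots> \<le> (\<Sum>f\<in>F. of_bool (?deg f = 1) + ?deg f)"
  proof (rule sum_mono)
    fix f assume "f \<in> F"
    then have "{e\<in>M. f \<inter> e \<noteq> {}} \<noteq> {}" using assms(5) by blast
    then have "?deg f \<noteq> 0" using assms(3) by simp
    then show "2 \<le> of_bool (?deg f = 1) + ?deg f" by auto
  qed
  also have "\<dots> = card {f\<in>F. ?deg f = 1} + (\<Sum>f\<in>F. ?deg f)"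
    using assms(2) by (simp add: sum.distrib Int_def)
  also have "\<dots> \<le> (\<Sum>e\<in>M. card (private_edges F M e)) + r * card M"
    using card_private_edges[OF assms(2,3)] sum_card_meeting_edges_le[OF assms(1-4)] by simp
  finally show ?thesis .
qed

definition rainbow_colouring ::
    "(nat \<Rightarrow> 'a set set) \<Rightarrow> nat \<Rightarrow> 'a set set \<Rightarrow> ('a set \<Rightarrow> nat) \<Rightarrow> bool" where
  "rainbow_colouring Ms n M \<phi> \<longleftrightarrow> inj_on \<phi> M \<and> \<phi> ` M \<subseteq> {..<n} \<and> (\<forall>e\<in>M. e \<in> Ms (\<phi> e))"

lemma rainbow_matching_iff_colouring:
  "rainbow_matching Ms n M \<longleftrightarrow> is_matching M \<and> (\<exists>\<phi>. rainbow_colouring Ms n M \<phi>)"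
  unfolding rainbow_matching_def rainbow_colouring_def by blast

lemma rainbow_colouring_finite_card_le:
  assumes "rainbow_colouring Ms n M \<phi>"
  shows "finite M" and "card M \<le> n"
proof -
  have "inj_on \<phi> M" and "\<phi> ` M \<subseteq> {..<n}"
    using assms unfolding rainbow_colouring_def by blast+
  then show "finite M"
    using finite_imageD finite_subset[of "\<phi> ` M" "{..<n}"] by blast
  show "card M \<le> n"
    using card_inj_on_le[OF \<open>inj_on \<phi> M\<close> \<open>\<phi> ` M \<subseteq> {..<n}\<close>] by simp
qed

lemma rainbow_colouring_subset:
  "rainbow_colouring Ms n M \<phi> \<Longrightarrow> M' \<subseteq> M \<Longrightarrow> rainbow_colouring Ms n M' \<phi>"
  unfolding rainbow_colouring_def by (blast intro: inj_on_subset)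

lemma rainbow_colouring_Un:
  assumes "rainbow_colouring Ms n M \<phi>" and "rainbow_colouring Ms n N \<psi>"
    and "\<phi> ` M \<inter> \<psi> ` N = {}"
  shows "rainbow_colouring Ms n (M \<union> N) (\<lambda>e. if e \<in> N then \<psi> e else \<phi> e)"
  using assms unfolding rainbow_colouring_def inj_on_def by (auto split: if_splits)

locale maximum_rainbow_matching =
  fixes Ms :: "nat \<Rightarrow> 'a set set" and n :: nat and M :: "'a set set" and \<phi> :: "'a set \<Rightarrow> nat"
  assumes matching: "is_matching M"
    and colouring: "rainbow_colouring Ms n M \<phi>"
    and maximum: "\<And>M'. rainbow_matching Ms n M' \<Longrightarrow> card M' \<le> card M"
begin

lemma finite_M: "finite M"
  using rainbow_colouring_finite_card_le(1)[OF colouring] .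

definition unused_colours :: "nat set" where
  "unused_colours = {..<n} - \<phi> ` M"

lemma card_M_add_unused_colours: "card M + card unused_colours = n"
proof -
  have "card (\<phi> ` M) = card M" and "\<phi> ` M \<subseteq> {..<n}"
    using colouring finite_M unfolding rainbow_colouring_def by (auto simp: card_image)
  then show ?thesis
    using rainbow_colouring_finite_card_le(2)[OF colouring]
    unfolding unused_colours_def by (simp add: card_Diff_subset finite_M)
qed

lemma exchange_card_le:
  assumes "E \<subseteq> M" and "is_matching N" and "finite N" and "{} \<notin> N"
    and "rainbow_colouring Ms n N \<psi>" and "\<phi> ` M \<inter> \<psi> ` N = {}"
    and "\<And>e f. e \<in> M - E \<Longrightarrow> f \<in> N \<Longrightarrow> e \<inter> f = {}"
  shows "card N \<le> card E"
proof -
  have "rainbow_colouring Ms n ((M - E) \<union> N) (\<lambda>e. if e \<in> N then \<psi> e else \<phi> e)"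
    using assms(5,6) rainbow_colouring_subset[OF colouring, of "M - E"]
    by (intro rainbow_colouring_Un) blast+
  moreover have "is_matching ((M - E) \<union> N)"
    using is_matching_subset[OF matching, of "M - E"] assms(2,7) by (intro is_matching_Un) auto
  ultimately have "card ((M - E) \<union> N) \<le> card M"
    using maximum rainbow_matching_iff_colouring by blast
  moreover have "(M - E) \<inter> N = {}"
  proof -
    \<comment> \<open>An empty edge is disjoint from itself; this is why {} is excluded from N.\<close>
    have "g = {}" if "g \<in> M - E" and "g \<in> N" for g
      using assms(7)[OF that] by simp
    then show ?thesis using assms(4) by blast
  qed
  moreover have "card (M - E) + card E = card M"
    using assms(1) finite_M by (metis card_Diff_subset card_mono finite_subset le_add_diff_inverse2)
  ultimately show ?thesis
    using finite_M assms(3) by (simp add: card_Un_disjoint)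
qed

lemma unused_colour_edge_meets_M:
  assumes "c \<in> unused_colours" and "f \<in> Ms c" and "f \<noteq> {}"
  shows "\<exists>e\<in>M. f \<inter> e \<noteq> {}"
proof (rule ccontr)
  assume "\<not> (\<exists>e\<in>M. f \<inter> e \<noteq> {})"
  then have "card {f} \<le> card ({} :: 'a set set)"
    using assms unfolding unused_colours_def
    by (intro exchange_card_le[where \<psi> = "\<lambda>_. c"])
       (auto simp: is_matching_def rainbow_colouring_def)
  then show False by simp
qed

lemma private_edges_of_unused_colours_intersect:
  assumes "c \<in> unused_colours" and "c' \<in> unused_colours" and "c \<noteq> c'"
    and "f \<in> private_edges (Ms c) M e" and "f' \<in> private_edges (Ms c') M e"
    and "f \<noteq> {}" and "f' \<noteq> {}"
  shows "f \<inter> f' \<noteq> {}"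
proof
  assume disjoint: "f \<inter> f' = {}"
  have "e \<in> M" and "f \<in> Ms c" and "f' \<in> Ms c'"
    and f_private: "\<And>g. g \<in> M \<Longrightarrow> g \<noteq> e \<Longrightarrow> f \<inter> g = {}"
    and f'_private: "\<And>g. g \<in> M \<Longrightarrow> g \<noteq> e \<Longrightarrow> f' \<inter> g = {}"
    using assms(4,5) unfolding private_edges_def by blast+
  have "f \<noteq> f'" using disjoint assms(6) by blast
  have "card {f, f'} \<le> card {e}"
  proof (rule exchange_card_le[where \<psi> = "(\<lambda>_. c)(f' := c')"])
    show "is_matching {f, f'}" using disjoint unfolding is_matching_def by blast
    show "rainbow_colouring Ms n {f, f'} ((\<lambda>_. c)(f' := c'))"
      using assms(1-3) \<open>f \<noteq> f'\<close> \<open>f \<in> Ms c\<close> \<open>f' \<in> Ms c'\<close>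
      unfolding rainbow_colouring_def unused_colours_def by auto
    show "\<phi> ` M \<inter> ((\<lambda>_. c)(f' := c')) ` {f, f'} = {}"
      using assms(1,2) \<open>f \<noteq> f'\<close> unfolding unused_colours_def by auto
    show "g \<inter> h = {}" if "g \<in> M - {e}" and "h \<in> {f, f'}" for g h
      using that f_private f'_private by blast
  qed (use \<open>e \<in> M\<close> assms(6,7) in auto)
  then show False using \<open>f \<noteq> f'\<close> by simp
qed

end

lemma ex_maximum_rainbow_matching: "\<exists>M \<phi>. maximum_rainbow_matching Ms n M \<phi>"
proof -
  have "rainbow_matching Ms n {}"
    unfolding rainbow_matching_def is_matching_def by simp
  moreover have "card M' < Suc n" if "rainbow_matching Ms n M'" for M'
    using that rainbow_colouring_finite_card_le(2) unfolding rainbow_matching_iff_colouring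
    by (meson le_imp_less_Suc)
  ultimately obtain M where "rainbow_matching Ms n M"
    and "\<And>M'. rainbow_matching Ms n M' \<Longrightarrow> card M' \<le> card M"
    using ex_has_greatest_nat[of "rainbow_matching Ms n" "{}" card "Suc n"] by blast
  then show ?thesis
    unfolding maximum_rainbow_matching_def rainbow_matching_iff_colouring by blast
qed

lemma sq_le_of_double_counting:
  fixes k m r a :: nat
  assumes "k * ((r + 1) * (m + k)) \<le> m * (k + (r - 1) * a) + k * (r * m)"
  shows "k * k \<le> (m + k) * a"
proof -
  have "(r + 1) * (k * k) \<le> m * ((r - 1) * a)"
    using assms by (simp add: algebra_simps)
  also have "\<dots> \<le> (r + 1) * ((m + k) * a)"
    by (simp add: algebra_simps mult_le_mono)
  finally show ?thesis
    by (subst (asm) mult_le_cancel1) simp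
qed

lemma real_le_mult_sqrt_if_sq_le:
  fixes k n b :: nat
  assumes "k * k \<le> n * b ^ 2"
  shows "real k \<le> b * sqrt (real n)"
proof -
  have "real k = sqrt (real (k * k))" by simp
  also have "\<dots> \<le> sqrt (real (n * b ^ 2))"
    using assms by (intro real_sqrt_le_mono) (simp only: of_nat_le_iff)
  also have "\<dots> = b * sqrt (real n)" by (simp add: real_sqrt_mult mult.commute)
  finally show ?thesis .
qed

locale maximum_rainbow_matching_uniform = maximum_rainbow_matching +
  fixes r :: nat
  assumes r_pos: "0 < r"
    and colour_classes: "\<And>i. i < n \<Longrightarrow> is_matching (Ms i) \<and> finite (Ms i) \<and> uniform r (Ms i)"
begin

lemma unused_colour_lt: "c \<in> unused_colours \<Longrightarrow> c < n"
  unfolding unused_colours_def by simp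

lemma uniform_M: "uniform r M"
  using colouring colour_classes unfolding rainbow_colouring_def uniform_def by blast

lemma edge_nonempty: "i < n \<Longrightarrow> f \<in> Ms i \<Longrightarrow> f \<noteq> {}"
  using colour_classes r_pos unfolding uniform_def by fastforce

lemma double_card_unused_colour_le:
  assumes "c \<in> unused_colours"
  shows "2 * card (Ms c) \<le> (\<Sum>e\<in>M. card (private_edges (Ms c) M e)) + r * card M"
  using assms colour_classes[OF unused_colour_lt[OF assms]] finite_M uniform_M
    unused_colour_edge_meets_M edge_nonempty[OF unused_colour_lt[OF assms]]
  by (intro two_card_le_private_edges) auto

lemma sum_private_edges_unused_colours_le:
  assumes "e \<in> M"
  shows "(\<Sum>c\<in>unused_colours. card (private_edges (Ms c) M e)) \<le> card unused_colours + (r - 1) * 4 ^ r"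
proof (rule sum_card_cross_intersecting_matchings_le)
  show "finite unused_colours" unfolding unused_colours_def by simp
next
  fix c assume "c \<in> unused_colours"
  then have "is_matching (Ms c)" and "finite (Ms c)" and "uniform r (Ms c)"
    using colour_classes unused_colour_lt by blast+
  have "finite e" and "card e = r"
    using uniform_M assms unfolding uniform_def by auto
  have sub: "private_edges (Ms c) M e \<subseteq> {f\<in>Ms c. f \<inter> e \<noteq> {}}"
    using assms unfolding private_edges_def by blast
  then have "card (private_edges (Ms c) M e) \<le> card {f\<in>Ms c. f \<inter> e \<noteq> {}}"
    using \<open>finite (Ms c)\<close> by (intro card_mono) auto
  also have "\<dots> \<le> r"
    using card_matching_edges_meeting_le[OF \<open>is_matching (Ms c)\<close> \<open>finite e\<close>] \<open>card e = r\<close>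
    by simp
  finally have "card (private_edges (Ms c) M e) \<le> r" .
  moreover have "private_edges (Ms c) M e \<subseteq> Ms c"
    unfolding private_edges_def by blast
  then have "is_matching (private_edges (Ms c) M e)" and "uniform r (private_edges (Ms c) M e)"
    using is_matching_subset[OF \<open>is_matching (Ms c)\<close>] \<open>uniform r (Ms c)\<close>
    unfolding uniform_def by blast+
  ultimately show "is_matching (private_edges (Ms c) M e) \<and> uniform r (private_edges (Ms c) M e)
      \<and> card (private_edges (Ms c) M e) \<le> r"
    by blast
next
  fix c c' f f'
  assume colours: "c \<in> unused_colours" "c' \<in> unused_colours" "c \<noteq> c'"
    and edges: "f \<in> private_edges (Ms c) M e" "f' \<in> private_edges (Ms c') M e"
  then have "f \<noteq> {}" and "f' \<noteq> {}"
    using edge_nonempty unused_colour_lt unfolding private_edges_def by blast+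
  then show "f \<inter> f' \<noteq> {}"
    using private_edges_of_unused_colours_intersect[OF colours edges] by blast
qed

lemma card_unused_colours_sq_le:
  assumes "\<And>i. i < n \<Longrightarrow> (r + 1) * n \<le> 2 * card (Ms i)"
  shows "card unused_colours * card unused_colours \<le> n * 4 ^ r"
proof -
  let ?U = unused_colours and ?P = "\<lambda>c e. card (private_edges (Ms c) M e)"
  have "card ?U * ((r + 1) * n) \<le> (\<Sum>c\<in>?U. 2 * card (Ms c))"
    using assms unused_colour_lt sum_mono[of ?U "\<lambda>_. (r + 1) * n"] by simp
  also have "\<dots> \<le> (\<Sum>c\<in>?U. (\<Sum>e\<in>M. ?P c e) + r * card M)"
    by (intro sum_mono double_card_unused_colour_le)
  also have "\<dots> = (\<Sum>e\<in>M. \<Sum>c\<in>?U. ?P c e) + card ?U * (r * card M)"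
    by (simp add: sum.distrib sum.swap[of _ ?U])
  also have "\<dots> \<le> card M * (card ?U + (r - 1) * 4 ^ r) + card ?U * (r * card M)"
    using sum_mono[OF sum_private_edges_unused_colours_le] by simp
  finally show ?thesis
    using sq_le_of_double_counting card_M_add_unused_colours by metis
qed

end

theorem lemma2p6:
  fixes r n :: nat and H :: "'a set set" and Ms :: "nat \<Rightarrow> 'a set set"
  assumes "r \<ge> 3" and "n \<ge> 1"
    and "uniform r H"
    and "\<And>i. i < n \<Longrightarrow> Ms i \<subseteq> H \<and> is_matching (Ms i)"
    and "\<And>i. i < n \<Longrightarrow> finite (Ms i) \<and> int (card (Ms i)) = \<lceil>real ((r + 1) * n) / 2\<rceil>"
  shows "\<exists>M. rainbow_matching Ms n M \<and> finite M \<and>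
           real (card M) \<ge> real n - 2 ^ r * sqrt (real n)"
proof -
  obtain M \<phi> where maximum: "maximum_rainbow_matching Ms n M \<phi>"
    using ex_maximum_rainbow_matching by blast
  interpret maximum_rainbow_matching_uniform Ms n M \<phi> r
  proof (rule maximum_rainbow_matching_uniform.intro[OF maximum], unfold_locales)
    show "0 < r" using assms(1) by simp
    fix i assume "i < n"
    then show "is_matching (Ms i) \<and> finite (Ms i) \<and> uniform r (Ms i)"
      using assms(3-5) unfolding uniform_def by blast
  qed
  have "(r + 1) * n \<le> 2 * card (Ms i)" if "i < n" for i
    using assms(5)[OF that] by linarith
  moreover have "(4::nat) ^ r = (2 ^ r) ^ 2"
    by (simp add: power2_eq_square flip: power_mult_distrib)
  ultimately have "card unused_colours * card unused_colours \<le> n * (2 ^ r) ^ 2"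
    using card_unused_colours_sq_le by simp
  then have "real (card unused_colours) \<le> 2 ^ r * sqrt (real n)"
    using real_le_mult_sqrt_if_sq_le by fastforce
  moreover have "rainbow_matching Ms n M"
    using matching colouring rainbow_matching_iff_colouring by blast
  ultimately show ?thesis
    using finite_M card_M_add_unused_colours by (intro exI[of _ M]) auto
qed

end
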